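(* Let $(\Omega,\mathcal G,\alpha)$ be a dynamical system. The following are equivalent: (i) $(\Omega,\mathcal G,\alpha)$ is minimal; (ii) $\Omega=\Omega_{\mathrm{PE}}$; (iii) $\Omega_{\mathrm{PE}}$ is closed and non-empty.
   Context: $(\mathcal G,+)$ is a countably infinite discrete group (written additively, not necessarily abelian). A dynamical system $(\Omega,\mathcal G,\alpha)$ consists of a compact metric space $\Omega$ and a map $\alpha$ from $\mathcal G$ to the homeomorphisms of $\Omega$ with $\alpha(g+h)=\alpha(g)\circ\alpha(h)$. It is minimal if every orbit $\{\alpha(g)(\omega):g\in\mathcal G\}$ is dense in $\Omega$. A sequence $(g_n)$ satisfies $g_n\to\infty$ if it eventually leaves every finite subset of $\mathcal G$. $L(\omega)=\{\nu\in\Omega:\exists (g_n),\ g_n\to\infty,\ \alpha(g_n)(\omega)\to\nu\}$; $\omega$ is pseudoergodic if $L(\omega)=\Omega$, and $\Omega_{\mathrm{PE}}$ denotes the set of pseudoergodic elements. *)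

theory Defs
  imports "HOL-Analysis.Analysis"
begin

definition dynamical_system :: "'a::metric_space set \<Rightarrow> ('g::group_add \<Rightarrow> 'a \<Rightarrow> 'a) \<Rightarrow> bool" where
  "dynamical_system \<Omega> \<alpha> \<longleftrightarrow>
     countable (UNIV :: 'g set) \<and> infinite (UNIV :: 'g set) \<and>
     compact \<Omega> \<and>
     (\<forall>g. \<exists>h. homeomorphism \<Omega> \<Omega> (\<alpha> g) h) \<and>
     (\<forall>g h. \<forall>x\<in>\<Omega>. \<alpha> (g + h) x = \<alpha> g (\<alpha> h x))"

definition orbit :: "('g \<Rightarrow> 'a \<Rightarrow> 'a) \<Rightarrow> 'a \<Rightarrow> 'a set" where
  "orbit \<alpha> \<omega> = {\<alpha> g \<omega> | g. True}"

definition minimal :: "'a::topological_space set \<Rightarrow> ('g \<Rightarrow> 'a \<Rightarrow> 'a) \<Rightarrow> bool" where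
  "minimal \<Omega> \<alpha> \<longleftrightarrow> (\<forall>\<omega>\<in>\<Omega>. \<Omega> \<subseteq> closure (orbit \<alpha> \<omega>))"

definition tends_to_infinity :: "(nat \<Rightarrow> 'g) \<Rightarrow> bool" where
  "tends_to_infinity gs \<longleftrightarrow> (\<forall>F. finite F \<longrightarrow> (\<forall>\<^sub>F n in sequentially. gs n \<notin> F))"

definition limit_set :: "'a::topological_space set \<Rightarrow> ('g \<Rightarrow> 'a \<Rightarrow> 'a) \<Rightarrow> 'a \<Rightarrow> 'a set" where
  "limit_set \<Omega> \<alpha> \<omega> = {\<nu>\<in>\<Omega>. \<exists>gs. tends_to_infinity gs \<and> (\<lambda>n. \<alpha> (gs n) \<omega>) \<longlonglongrightarrow> \<nu>}"

definition pseudoergodic :: "'a::topological_space set \<Rightarrow> ('g \<Rightarrow> 'a \<Rightarrow> 'a) \<Rightarrow> 'a \<Rightarrow> bool" where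
  "pseudoergodic \<Omega> \<alpha> \<omega> \<longleftrightarrow> limit_set \<Omega> \<alpha> \<omega> = \<Omega>"

definition PE_set :: "'a::topological_space set \<Rightarrow> ('g \<Rightarrow> 'a \<Rightarrow> 'a) \<Rightarrow> 'a set" where
  "PE_set \<Omega> \<alpha> = {\<omega>\<in>\<Omega>. pseudoergodic \<Omega> \<alpha> \<omega>}"

end

theory Submission
  imports Defs
begin

text \<open>Over a countable group, L(\<omega>) is the set of cluster points of the orbit of \<omega> counted
  with multiplicity: \<nu> \<in> L(\<omega>) iff every ball around \<nu> contains \<alpha> g \<omega> for infinitely many g.
  This makes L(\<omega>) closed and invariant under the action, and compactness together with the
  infiniteness of the group makes it non-empty. If the system is minimal, L(\<omega>) therefore
  contains a dense orbit and equals \<Omega>. Conversely every pseudoergodic point has dense orbit,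
  and pseudoergodicity is invariant along orbits, so a closed non-empty set of pseudoergodic
  points contains the closure of a dense orbit.\<close>

definition cluster_set :: "'a::metric_space set \<Rightarrow> ('g \<Rightarrow> 'a \<Rightarrow> 'a) \<Rightarrow> 'a \<Rightarrow> 'a set" where
  "cluster_set \<Omega> \<alpha> \<omega> = {\<nu>\<in>\<Omega>. \<forall>e>0. infinite {g. dist (\<alpha> g \<omega>) \<nu> < e}}"

lemma dynamical_system_maps_to:
  assumes "dynamical_system \<Omega> \<alpha>" "x \<in> \<Omega>"
  shows "\<alpha> g x \<in> \<Omega>"
  using assms unfolding dynamical_system_def homeomorphism_def by blast

lemma dynamical_system_continuous_on:
  assumes "dynamical_system \<Omega> \<alpha>"
  shows "continuous_on \<Omega> (\<alpha> g)"
  using assms unfolding dynamical_system_def homeomorphism_def by blast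

lemma dynamical_system_add:
  assumes "dynamical_system \<Omega> \<alpha>" "x \<in> \<Omega>"
  shows "\<alpha> (g + h) x = \<alpha> g (\<alpha> h x)"
  using assms unfolding dynamical_system_def by blast

lemma tends_to_infinity_inj:
  fixes gs :: "nat \<Rightarrow> 'g"
  assumes "inj gs"
  shows "tends_to_infinity gs"
  unfolding tends_to_infinity_def
proof (intro allI impI)
  fix F :: "'g set" assume "finite F"
  then have "finite (gs -` F)" using assms by (rule finite_vimageI)
  then show "\<forall>\<^sub>F n in sequentially. gs n \<notin> F"
    by (simp add: cofinite_eq_sequentially[symmetric] eventually_cofinite vimage_def)
qed

lemma LIMSEQ_dist_less_inverse_Suc:
  fixes x :: "nat \<Rightarrow> 'a::metric_space"
  assumes "\<And>n. dist (x n) l < inverse (real (Suc n))"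
  shows "x \<longlonglongrightarrow> l"
proof -
  have bound: "\<forall>\<^sub>F n in sequentially. norm (dist (x n) l) \<le> inverse (real (Suc n))"
    using assms by (intro always_eventually allI order.strict_implies_order)
      (simp only: real_norm_def abs_of_nonneg[OF zero_le_dist])
  show ?thesis
    using Lim_null_comparison[OF bound LIMSEQ_inverse_real_of_nat] by (subst tendsto_dist_iff)
qed

lemma limit_set_subset_cluster_set: "limit_set \<Omega> \<alpha> \<omega> \<subseteq> cluster_set \<Omega> \<alpha> \<omega>"
proof
  fix \<nu> assume "\<nu> \<in> limit_set \<Omega> \<alpha> \<omega>"
  then obtain gs where "\<nu> \<in> \<Omega>" and gs: "tends_to_infinity gs" "(\<lambda>n. \<alpha> (gs n) \<omega>) \<longlonglongrightarrow> \<nu>"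
    unfolding limit_set_def by blast
  have "infinite {g. dist (\<alpha> g \<omega>) \<nu> < e}" if "e > 0" for e
  proof
    assume "finite {g. dist (\<alpha> g \<omega>) \<nu> < e}"
    with gs(1) have "\<forall>\<^sub>F n in sequentially. gs n \<notin> {g. dist (\<alpha> g \<omega>) \<nu> < e}"
      unfolding tends_to_infinity_def by blast
    moreover have "\<forall>\<^sub>F n in sequentially. dist (\<alpha> (gs n) \<omega>) \<nu> < e"
      using gs(2) \<open>e > 0\<close> by (rule tendstoD)
    ultimately have "\<forall>\<^sub>F n in sequentially. False"
      by (rule eventually_elim2) simp
    then show False by simp
  qed
  with \<open>\<nu> \<in> \<Omega>\<close> show "\<nu> \<in> cluster_set \<Omega> \<alpha> \<omega>" unfolding cluster_set_def by blast
qed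

lemma cluster_set_subset_limit_set:
  assumes "countable (UNIV :: 'g set)"
  shows "cluster_set \<Omega> \<alpha> \<omega> \<subseteq> limit_set \<Omega> (\<alpha> :: 'g \<Rightarrow> _) \<omega>"
proof
  fix \<nu> assume \<nu>: "\<nu> \<in> cluster_set \<Omega> \<alpha> \<omega>"
  obtain enum :: "'g \<Rightarrow> nat" where "inj enum" using assms by (rule countableE)
  have "\<exists>g. n \<le> enum g \<and> dist (\<alpha> g \<omega>) \<nu> < inverse (real (Suc n))" for n
  proof -
    let ?S = "{g. dist (\<alpha> g \<omega>) \<nu> < inverse (real (Suc n))}"
    have "inverse (real (Suc n)) > 0" by simp
    then have "infinite ?S" using \<nu> unfolding cluster_set_def by blast
    then have "infinite (enum ` ?S)"
      using \<open>inj enum\<close> finite_imageD inj_on_subset by blast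
    then show ?thesis unfolding infinite_nat_iff_unbounded_le by blast
  qed
  then obtain gs where gs: "\<And>n. n \<le> enum (gs n)"
    "\<And>n. dist (\<alpha> (gs n) \<omega>) \<nu> < inverse (real (Suc n))"
    by metis
  have "tends_to_infinity gs"
    unfolding tends_to_infinity_def
  proof (intro allI impI)
    fix F :: "'g set" assume "finite F"
    then obtain k where "enum ` F \<subseteq> {..<k}" using finite_nat_bounded by blast
    then have "gs n \<notin> F" if "k \<le> n" for n using gs(1)[of n] that by force
    then show "\<forall>\<^sub>F n in sequentially. gs n \<notin> F" unfolding eventually_sequentially by blast
  qed
  moreover have "(\<lambda>n. \<alpha> (gs n) \<omega>) \<longlonglongrightarrow> \<nu>"
    using gs(2) by (rule LIMSEQ_dist_less_inverse_Suc)
  ultimately show "\<nu> \<in> limit_set \<Omega> \<alpha> \<omega>"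
    using \<nu> unfolding limit_set_def cluster_set_def by blast
qed

lemma limit_set_eq_cluster_set:
  assumes "countable (UNIV :: 'g set)"
  shows "limit_set \<Omega> (\<alpha> :: 'g \<Rightarrow> _) \<omega> = cluster_set \<Omega> \<alpha> \<omega>"
  using limit_set_subset_cluster_set cluster_set_subset_limit_set[OF assms] by blast

lemma closed_cluster_set:
  assumes "closed \<Omega>"
  shows "closed (cluster_set \<Omega> \<alpha> \<omega>)"
  unfolding closure_subset_eq[symmetric]
proof
  fix \<nu> assume "\<nu> \<in> closure (cluster_set \<Omega> \<alpha> \<omega>)"
  then have near: "\<forall>e>0. \<exists>\<mu>\<in>cluster_set \<Omega> \<alpha> \<omega>. dist \<mu> \<nu> < e"
    unfolding closure_approachable .
  then have "\<nu> \<in> closure \<Omega>"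
    unfolding closure_approachable cluster_set_def by blast
  then have "\<nu> \<in> \<Omega>" using assms by simp
  moreover have "infinite {g. dist (\<alpha> g \<omega>) \<nu> < e}" if "e > 0" for e
  proof -
    obtain \<mu> where \<mu>: "\<mu> \<in> cluster_set \<Omega> \<alpha> \<omega>" "dist \<mu> \<nu> < e / 2"
      using near \<open>e > 0\<close> half_gt_zero by blast
    then have "infinite {g. dist (\<alpha> g \<omega>) \<mu> < e / 2}"
      using half_gt_zero[OF \<open>e > 0\<close>] unfolding cluster_set_def by blast
    moreover have "{g. dist (\<alpha> g \<omega>) \<mu> < e / 2} \<subseteq> {g. dist (\<alpha> g \<omega>) \<nu> < e}"
      using \<mu>(2) by (intro Collect_mono impI) (metis dist_commute dist_triangle_half_l)
    ultimately show ?thesis using finite_subset by blast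
  qed
  ultimately show "\<nu> \<in> cluster_set \<Omega> \<alpha> \<omega>" unfolding cluster_set_def by blast
qed

lemma cluster_set_invariant:
  fixes \<alpha> :: "'g::group_add \<Rightarrow> 'a::metric_space \<Rightarrow> 'a"
  assumes ds: "dynamical_system \<Omega> \<alpha>" and "\<omega> \<in> \<Omega>" and \<nu>: "\<nu> \<in> cluster_set \<Omega> \<alpha> \<omega>"
  shows "\<alpha> h \<nu> \<in> cluster_set \<Omega> \<alpha> \<omega>"
proof -
  have "\<nu> \<in> \<Omega>" using \<nu> unfolding cluster_set_def by blast
  have "infinite {g. dist (\<alpha> g \<omega>) (\<alpha> h \<nu>) < e}" if "e > 0" for e
  proof -
    obtain d where "d > 0" and d: "\<And>y. y \<in> \<Omega> \<Longrightarrow> dist y \<nu> < d \<Longrightarrow> dist (\<alpha> h y) (\<alpha> h \<nu>) < e"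
      using dynamical_system_continuous_on[OF ds] \<open>\<nu> \<in> \<Omega>\<close> \<open>e > 0\<close>
      unfolding continuous_on_iff by metis
    have "infinite {g. dist (\<alpha> g \<omega>) \<nu> < d}" using \<nu> \<open>d > 0\<close> unfolding cluster_set_def by simp
    then have "infinite ((+) h ` {g. dist (\<alpha> g \<omega>) \<nu> < d})"
      by (simp add: finite_image_iff)
    moreover have "(+) h ` {g. dist (\<alpha> g \<omega>) \<nu> < d} \<subseteq> {g. dist (\<alpha> g \<omega>) (\<alpha> h \<nu>) < e}"
      using d dynamical_system_maps_to[OF ds \<open>\<omega> \<in> \<Omega>\<close>] dynamical_system_add[OF ds \<open>\<omega> \<in> \<Omega>\<close>]
      by auto
    ultimately show ?thesis using finite_subset by blast
  qed
  then show ?thesis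
    using dynamical_system_maps_to[OF ds \<open>\<nu> \<in> \<Omega>\<close>] unfolding cluster_set_def by blast
qed

lemma limit_set_nonempty:
  fixes \<alpha> :: "'g::group_add \<Rightarrow> 'a::metric_space \<Rightarrow> 'a"
  assumes ds: "dynamical_system \<Omega> \<alpha>" and "\<omega> \<in> \<Omega>"
  shows "limit_set \<Omega> \<alpha> \<omega> \<noteq> {}"
proof -
  obtain gs :: "nat \<Rightarrow> 'g" where "inj gs"
    using ds infinite_countable_subset[of "UNIV :: 'g set"] unfolding dynamical_system_def by blast
  have "compact \<Omega>" using ds unfolding dynamical_system_def by blast
  then obtain \<nu> r where "\<nu> \<in> \<Omega>" "strict_mono r" "((\<lambda>n. \<alpha> (gs n) \<omega>) \<circ> r) \<longlonglongrightarrow> \<nu>"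
    using compact_imp_seq_compact dynamical_system_maps_to[OF ds \<open>\<omega> \<in> \<Omega>\<close>]
    unfolding seq_compact_def by metis
  moreover have "tends_to_infinity (gs \<circ> r)"
    using \<open>inj gs\<close> \<open>strict_mono r\<close> strict_mono_imp_inj_on
    by (intro tends_to_infinity_inj inj_compose) auto
  ultimately show ?thesis unfolding limit_set_def comp_def by blast
qed

lemma limit_set_shift:
  fixes \<alpha> :: "'g::group_add \<Rightarrow> 'a::metric_space \<Rightarrow> 'a"
  assumes ds: "dynamical_system \<Omega> \<alpha>" and "\<omega> \<in> \<Omega>"
  shows "limit_set \<Omega> \<alpha> \<omega> \<subseteq> limit_set \<Omega> \<alpha> (\<alpha> h \<omega>)"
proof
  fix \<nu> assume "\<nu> \<in> limit_set \<Omega> \<alpha> \<omega>"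
  then obtain gs where "\<nu> \<in> \<Omega>" and gs: "tends_to_infinity gs" "(\<lambda>n. \<alpha> (gs n) \<omega>) \<longlonglongrightarrow> \<nu>"
    unfolding limit_set_def by blast
  have "tends_to_infinity (\<lambda>n. gs n - h)"
    unfolding tends_to_infinity_def
  proof (intro allI impI)
    fix F :: "'g set" assume "finite F"
    then have "\<forall>\<^sub>F n in sequentially. gs n \<notin> (\<lambda>f. f + h) ` F"
      using gs(1) unfolding tends_to_infinity_def by blast
    then show "\<forall>\<^sub>F n in sequentially. gs n - h \<notin> F"
      by (rule eventually_mono) (metis diff_add_cancel image_eqI)
  qed
  moreover have "\<alpha> (gs n - h) (\<alpha> h \<omega>) = \<alpha> (gs n) \<omega>" for n
    using dynamical_system_add[OF ds \<open>\<omega> \<in> \<Omega>\<close>] by (metis diff_add_cancel)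
  ultimately show "\<nu> \<in> limit_set \<Omega> \<alpha> (\<alpha> h \<omega>)"
    using gs(2) \<open>\<nu> \<in> \<Omega>\<close> unfolding limit_set_def by auto
qed

lemma pseudoergodic_orbit_dense:
  fixes \<Omega> :: "'a::metric_space set"
  assumes "pseudoergodic \<Omega> \<alpha> \<omega>"
  shows "\<Omega> \<subseteq> closure (orbit \<alpha> \<omega>)"
proof
  fix \<nu> assume "\<nu> \<in> \<Omega>"
  then obtain gs where "(\<lambda>n. \<alpha> (gs n) \<omega>) \<longlonglongrightarrow> \<nu>"
    using assms unfolding pseudoergodic_def limit_set_def by blast
  moreover have "\<alpha> (gs n) \<omega> \<in> orbit \<alpha> \<omega>" for n unfolding orbit_def by blast
  ultimately show "\<nu> \<in> closure (orbit \<alpha> \<omega>)"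
    unfolding closure_sequential by (intro exI[of _ "\<lambda>n. \<alpha> (gs n) \<omega>"]) simp
qed

lemma PE_set_invariant:
  fixes \<alpha> :: "'g::group_add \<Rightarrow> 'a::metric_space \<Rightarrow> 'a"
  assumes ds: "dynamical_system \<Omega> \<alpha>" and "\<omega> \<in> PE_set \<Omega> \<alpha>"
  shows "\<alpha> h \<omega> \<in> PE_set \<Omega> \<alpha>"
  using assms limit_set_shift[OF ds] dynamical_system_maps_to[OF ds]
  unfolding PE_set_def pseudoergodic_def limit_set_def by blast

lemma PE_set_eq_if_closed:
  fixes \<alpha> :: "'g::group_add \<Rightarrow> 'a::metric_space \<Rightarrow> 'a"
  assumes ds: "dynamical_system \<Omega> \<alpha>"
    and "closed (PE_set \<Omega> \<alpha>)" and "\<omega> \<in> PE_set \<Omega> \<alpha>"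
  shows "\<Omega> = PE_set \<Omega> \<alpha>"
proof -
  have "orbit \<alpha> \<omega> \<subseteq> PE_set \<Omega> \<alpha>"
    using PE_set_invariant[OF ds \<open>\<omega> \<in> PE_set \<Omega> \<alpha>\<close>] unfolding orbit_def by blast
  then have "closure (orbit \<alpha> \<omega>) \<subseteq> PE_set \<Omega> \<alpha>"
    using \<open>closed (PE_set \<Omega> \<alpha>)\<close> by (rule closure_minimal)
  then show ?thesis
    using \<open>\<omega> \<in> PE_set \<Omega> \<alpha>\<close> pseudoergodic_orbit_dense unfolding PE_set_def by blast
qed

lemma minimal_imp_pseudoergodic:
  fixes \<alpha> :: "'g::group_add \<Rightarrow> 'a::metric_space \<Rightarrow> 'a"
  assumes ds: "dynamical_system \<Omega> \<alpha>" and "minimal \<Omega> \<alpha>" and "\<omega> \<in> \<Omega>"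
  shows "pseudoergodic \<Omega> \<alpha> \<omega>"
proof -
  have "countable (UNIV :: 'g set)" "closed \<Omega>"
    using ds unfolding dynamical_system_def by (auto intro: compact_imp_closed)
  then have L: "limit_set \<Omega> \<alpha> \<omega> = cluster_set \<Omega> \<alpha> \<omega>"
    by (simp add: limit_set_eq_cluster_set)
  obtain \<nu> where \<nu>: "\<nu> \<in> cluster_set \<Omega> \<alpha> \<omega>"
    using limit_set_nonempty[OF ds \<open>\<omega> \<in> \<Omega>\<close>] L by blast
  then have "\<Omega> \<subseteq> closure (orbit \<alpha> \<nu>)"
    using \<open>minimal \<Omega> \<alpha>\<close> unfolding minimal_def cluster_set_def by blast
  also have "\<dots> \<subseteq> cluster_set \<Omega> \<alpha> \<omega>"
    using cluster_set_invariant[OF ds \<open>\<omega> \<in> \<Omega>\<close> \<nu>] closed_cluster_set[OF \<open>closed \<Omega>\<close>]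
    by (intro closure_minimal) (auto simp: orbit_def)
  finally show ?thesis
    using L unfolding pseudoergodic_def limit_set_def by blast
qed

theorem proposition3p6:
  fixes \<Omega> :: "'a::metric_space set" and \<alpha> :: "'g::group_add \<Rightarrow> 'a \<Rightarrow> 'a"
  assumes "dynamical_system \<Omega> \<alpha>" and "\<Omega> \<noteq> {}"
  shows "(minimal \<Omega> \<alpha> \<longleftrightarrow> \<Omega> = PE_set \<Omega> \<alpha>) \<and>
         (\<Omega> = PE_set \<Omega> \<alpha> \<longleftrightarrow> closedin (top_of_set \<Omega>) (PE_set \<Omega> \<alpha>) \<and> PE_set \<Omega> \<alpha> \<noteq> {})"
proof -
  note ds = assms(1)
  have "closed \<Omega>" using ds unfolding dynamical_system_def by (simp add: compact_imp_closed)
  have "minimal \<Omega> \<alpha> \<longleftrightarrow> \<Omega> = PE_set \<Omega> \<alpha>"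
    using minimal_imp_pseudoergodic[OF ds] pseudoergodic_orbit_dense
    unfolding minimal_def PE_set_def by blast
  moreover have "closedin (top_of_set \<Omega>) (PE_set \<Omega> \<alpha>) \<longleftrightarrow> closed (PE_set \<Omega> \<alpha>)"
    using \<open>closed \<Omega>\<close> closedin_closed_trans closed_subset[of "PE_set \<Omega> \<alpha>" \<Omega>]
    unfolding PE_set_def by blast
  ultimately show ?thesis
    using assms(2) PE_set_eq_if_closed[OF ds] closed_subset[of "PE_set \<Omega> \<alpha>" \<Omega>]
    by (metis \<open>closed \<Omega>\<close> equals0I)
qed

end
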